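(* Let $V$ be a finite nonempty set and $f:\{0,1\}^V\to\{0,1\}^V$. Suppose that for every integer $k$ with $1\leq k\leq |V|$, there are at most $2^k-1$ points $x\in\{0,1\}^V$ such that the local interaction graph $Gf(x)$ has a cycle of length at most $k$. Then $f$ has a unique fixed point.
   Context: For $x\in\{0,1\}^V$, $j\in V$, $\alpha\in\{0,1\}$, let $x^{j\alpha}$ be the point equal to $x$ except that its $j$-component is $\alpha$. The local interaction graph $Gf(x)$ is the signed digraph with vertex set $V$ having, for $i,j\in V$, a positive arc from $j$ to $i$ if $f_i(x^{j1})-f_i(x^{j0})=1$ and a negative arc from $j$ to $i$ if $f_i(x^{j1})-f_i(x^{j0})=-1$ (and no arc from $j$ to $i$ otherwise); loops are allowed. A cycle is a subgraph whose underlying unsigned digraph is a directed cycle (a loop is a cycle of length 1); its length is its number of arcs. *)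

theory Defs
  imports Main
begin

text \<open>Points of {0,1}^V are functions V \<Rightarrow> bool (True = 1, False = 0);
  the finite nonempty vertex set V is a finite type 'v.\<close>

definition bit :: "bool \<Rightarrow> int" where
  "bit b = (if b then 1 else 0)"

text \<open>Signed arcs of the local interaction graph Gf(x): (j, s, i) means an arc from j
  to i of sign s, where s = f_i(x^{j1}) - f_i(x^{j0}) and s is 1 or -1.\<close>
definition local_graph :: "(('v \<Rightarrow> bool) \<Rightarrow> ('v \<Rightarrow> bool)) \<Rightarrow> ('v \<Rightarrow> bool) \<Rightarrow> ('v \<times> int \<times> 'v) set" where
  "local_graph f x = {(j, s, i). s = bit (f (x(j := True)) i) - bit (f (x(j := False)) i) \<and> s \<noteq> 0}"

definition has_cycle_of_length :: "(('v \<Rightarrow> bool) \<Rightarrow> ('v \<Rightarrow> bool)) \<Rightarrow> ('v \<Rightarrow> bool) \<Rightarrow> nat \<Rightarrow> bool" where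
  "has_cycle_of_length f x l \<longleftrightarrow> (\<exists>vs :: 'v list. length vs = l \<and> l \<ge> 1 \<and> distinct vs \<and>
     (\<forall>t < l. \<exists>s. (vs ! t, s, vs ! ((t + 1) mod l)) \<in> local_graph f x))"

definition has_short_cycle :: "(('v \<Rightarrow> bool) \<Rightarrow> ('v \<Rightarrow> bool)) \<Rightarrow> ('v \<Rightarrow> bool) \<Rightarrow> nat \<Rightarrow> bool" where
  "has_short_cycle f x k \<longleftrightarrow> (\<exists>l \<le> k. has_cycle_of_length f x l)"

end

theory Submission
  imports Defs
begin

text \<open>For a set I of coordinates and a point z, consider the subcube of points agreeing
  with z outside I, and count its points according to their set of unstable coordinates
  in I (those i \<in> I with f x i \<noteq> x i). Fixing coordinate v \<in> I to 0 or to 1 splits the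
  subcube into two subcubes of dimension |I| - 1, and B and B \<union> {v} are together counted
  once in each half. Hence, if every smaller subcube contains exactly one point with no
  unstable coordinate, every subset of I is realised exactly once as an unstable set in
  every smaller subcube, and in I itself the counts of B and B \<union> {v} add up to 2.

  Take a subcube of least dimension for which the count of the empty set is not 1. If some
  j \<in> I had no out-neighbour in I in Gf(x) for a point x of it, the two points x^{j0}
  and x^{j1} would have unstable sets B and B \<union> {j}, both counted at least once, hence
  exactly once; by the parity relation the empty set would be counted once as well. So in
  every one of the 2^|I| points of the subcube the restriction of Gf(x) to I has no sink and
  therefore has a cycle of length at most |I|, contradicting the hypothesis for k = |I|.
  The whole cube is the case I = V.\<close>

lemma first_repetition:
  fixes p :: "nat \<Rightarrow> 'a"
  assumes "finite (range p)"
  obtains a b where "a < b" "p a = p b" "inj_on p {a..<b}"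
proof -
  have "\<not> inj p"
    using assms finite_imageD infinite_UNIV_nat by blast
  then have ex: "\<exists>b a. a < b \<and> p a = p b"
    unfolding inj_def by (metis linorder_neqE_nat)
  define b where "b = (LEAST b. \<exists>a<b. p a = p b)"
  obtain a where "a < b" "p a = p b"
    using LeastI_ex[OF ex] unfolding b_def by blast
  moreover have "inj_on p {a..<b}"
  proof (rule inj_onI)
    fix s t assume st: "s \<in> {a..<b}" "t \<in> {a..<b}" "p s = p t"
    have no_rep: "\<not> (\<exists>r<q. p r = p q)" if "q < b" for q
      using that not_less_Least unfolding b_def by blast
    show "s = t"
      using st no_rep[of s] no_rep[of t] by (cases s t rule: linorder_cases) auto
  qed
  ultimately show thesis by (rule that)
qed

lemma closed_walk_segment_cycle:
  fixes p :: "nat \<Rightarrow> 'a"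
  assumes step: "\<And>n. E (p n) (p (Suc n))"
    and ab: "a < b" "p a = p b" and inj: "inj_on p {a..<b}"
  defines "vs \<equiv> map p [a..<b]"
  shows "distinct vs" and "\<And>t. t < length vs \<Longrightarrow> E (vs ! t) (vs ! ((t + 1) mod length vs))"
proof -
  show "distinct vs"
    using inj by (simp add: vs_def distinct_map)
next
  fix t assume t: "t < length vs"
  have "vs ! ((t + 1) mod length vs) = p (Suc (a + t))"
  proof (cases "t + 1 < length vs")
    case True
    then show ?thesis by (simp add: vs_def)
  next
    case False
    with t have "t + 1 = length vs" by simp
    then have "(t + 1) mod length vs = 0" "Suc (a + t) = b"
      using ab by (simp_all add: vs_def)
    with ab show ?thesis by (simp add: vs_def)
  qed
  moreover have "vs ! t = p (a + t)"
    using t by (simp add: vs_def)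
  ultimately show "E (vs ! t) (vs ! ((t + 1) mod length vs))"
    using step by simp
qed

lemma cycle_if_no_sink:
  fixes E :: "'a \<Rightarrow> 'a \<Rightarrow> bool"
  assumes fin: "finite I" and "I \<noteq> {}" and no_sink: "\<forall>j\<in>I. \<exists>i\<in>I. E j i"
  shows "\<exists>vs. 1 \<le> length vs \<and> length vs \<le> card I \<and> distinct vs \<and>
           (\<forall>t < length vs. E (vs ! t) (vs ! ((t + 1) mod length vs)))"
proof -
  obtain j0 where j0: "j0 \<in> I" using \<open>I \<noteq> {}\<close> by blast
  define nxt where "nxt j = (SOME i. i \<in> I \<and> E j i)" for j
  have nxt: "j \<in> I \<Longrightarrow> nxt j \<in> I \<and> E j (nxt j)" for j
    unfolding nxt_def using no_sink by (metis (mono_tags, lifting) someI_ex)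
  define p where "p n = (nxt ^^ n) j0" for n
  have p_in: "p n \<in> I" for n
    by (induction n) (auto simp: p_def j0 nxt)
  have step: "E (p n) (p (Suc n))" for n
    using nxt[OF p_in] by (simp add: p_def)
  have "finite (range p)"
    using p_in finite_subset[OF _ fin] by blast
  then obtain a b where ab: "a < b" "p a = p b" "inj_on p {a..<b}"
    by (rule first_repetition)
  define vs where "vs = map p [a..<b]"
  have "distinct vs" and "\<forall>t < length vs. E (vs ! t) (vs ! ((t + 1) mod length vs))"
    using closed_walk_segment_cycle[of E p, OF step ab] by (simp_all add: vs_def)
  moreover have "set vs \<subseteq> I"
    using p_in by (auto simp: vs_def)
  then have "length vs \<le> card I"
    using distinct_card[OF \<open>distinct vs\<close>] card_mono[OF fin] by metis
  moreover have "1 \<le> length vs"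
    using ab by (simp add: vs_def)
  ultimately show ?thesis by blast
qed

definition subcube :: "'v set \<Rightarrow> ('v \<Rightarrow> bool) \<Rightarrow> ('v \<Rightarrow> bool) set" where
  "subcube I z = {x. \<forall>i. i \<notin> I \<longrightarrow> x i = z i}"

definition unstable :: "(('v \<Rightarrow> bool) \<Rightarrow> ('v \<Rightarrow> bool)) \<Rightarrow> 'v set \<Rightarrow> ('v \<Rightarrow> bool) \<Rightarrow> 'v set" where
  "unstable f I x = {i \<in> I. f x i \<noteq> x i}"

definition count_unstable ::
    "(('v \<Rightarrow> bool) \<Rightarrow> ('v \<Rightarrow> bool)) \<Rightarrow> 'v set \<Rightarrow> ('v \<Rightarrow> bool) \<Rightarrow> 'v set \<Rightarrow> nat" where
  "count_unstable f I z A = card {x \<in> subcube I z. unstable f I x = A}"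

lemma card_subcube:
  fixes I :: "'v::finite set"
  shows "card (subcube I z) = 2 ^ card I"
proof -
  have "bij_betw (\<lambda>x. {i \<in> I. x i}) (subcube I z) (Pow I)"
    by (rule bij_betw_byWitness[where f'="\<lambda>S i. if i \<in> I then i \<in> S else z i"])
       (auto simp: subcube_def)
  then show ?thesis
    by (simp add: bij_betw_same_card card_Pow)
qed

lemma count_unstable_empty_dim: "count_unstable f {} z {} = 1"
proof -
  have "{x \<in> subcube {} z. unstable f {} x = {}} = {z}"
    by (auto simp: subcube_def unstable_def)
  then show ?thesis by (simp add: count_unstable_def)
qed

lemma count_unstable_UNIV: "count_unstable f UNIV z {} = card {x. f x = x}"
proof -
  have "{x \<in> subcube UNIV z. unstable f UNIV x = {}} = {x. f x = x}"
    by (auto simp: subcube_def unstable_def)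
  then show ?thesis by (simp add: count_unstable_def)
qed

lemma count_unstable_pos:
  fixes f :: "('v::finite \<Rightarrow> bool) \<Rightarrow> ('v \<Rightarrow> bool)"
  assumes "x \<in> subcube I z"
  shows "1 \<le> count_unstable f I z (unstable f I x)"
  using assms by (auto simp: count_unstable_def Suc_le_eq card_gt_0_iff)

lemma count_unstable_split:
  fixes f :: "('v::finite \<Rightarrow> bool) \<Rightarrow> ('v \<Rightarrow> bool)"
  assumes v: "v \<in> I" and B: "B \<subseteq> I - {v}"
  shows "count_unstable f I z B + count_unstable f I z (insert v B) =
         count_unstable f (I - {v}) (z(v := False)) B + count_unstable f (I - {v}) (z(v := True)) B"
proof -
  define S where "S A = {x \<in> subcube I z. unstable f I x = A}" for A
  define T where "T b = {x \<in> subcube (I - {v}) (z(v := b)). unstable f (I - {v}) x = B}" for b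
  have unstable_diff: "unstable f (I - {v}) x = unstable f I x - {v}" for x
    by (auto simp: unstable_def)
  have subcube_fix: "x \<in> subcube (I - {v}) (z(v := b)) \<longleftrightarrow> x \<in> subcube I z \<and> x v = b" for x b
    using v by (auto simp: subcube_def)
  have "v \<notin> B" using B by blast
  then have "S B \<union> S (insert v B) = T False \<union> T True"
    unfolding S_def T_def subcube_fix unstable_diff by auto
  moreover have "S B \<inter> S (insert v B) = {}" "T False \<inter> T True = {}"
    using \<open>v \<notin> B\<close> by (auto simp: S_def T_def subcube_def)
  ultimately show ?thesis
    unfolding count_unstable_def S_def[symmetric] T_def[symmetric]
    by (metis card_Un_disjoint finite)
qed

lemma pair_sums_two_imp_one_iff:
  fixes c :: "'a set \<Rightarrow> nat"
  assumes pair: "\<And>v B. v \<in> I \<Longrightarrow> B \<subseteq> I - {v} \<Longrightarrow> c B + c (insert v B) = 2"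
    and "finite A" "A \<subseteq> I"
  shows "c A = 1 \<longleftrightarrow> c {} = 1"
  using \<open>finite A\<close> \<open>A \<subseteq> I\<close>
proof (induction A rule: finite_induct)
  case (insert a A)
  then have "c A + c (insert a A) = 2" by (intro pair) auto
  with insert show ?case by auto
qed simp

lemma count_unstable_eq_one:
  fixes f :: "('v::finite \<Rightarrow> bool) \<Rightarrow> ('v \<Rightarrow> bool)"
  assumes "\<And>J z. card J \<le> card I \<Longrightarrow> count_unstable f J z {} = 1" and "A \<subseteq> I"
  shows "count_unstable f I z A = 1"
  using assms
proof (induction "card I" arbitrary: I z A rule: less_induct)
  case less
  have "count_unstable f I z B + count_unstable f I z (insert v B) = 2"
    if v: "v \<in> I" and B: "B \<subseteq> I - {v}" for v B
  proof -
    have smaller: "card (I - {v}) < card I"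
      using card_Diff1_less[OF finite v] by simp
    have "count_unstable f (I - {v}) z' B = 1" for z'
      using less.hyps[OF smaller] less.prems(1) smaller B by simp
    then show ?thesis
      using count_unstable_split[OF v B] by simp
  qed
  then show ?case
    using pair_sums_two_imp_one_iff[of I "count_unstable f I z" A] less.prems by simp
qed

context
  fixes f :: "('v::finite \<Rightarrow> bool) \<Rightarrow> ('v \<Rightarrow> bool)" and I :: "'v set" and z :: "'v \<Rightarrow> bool"
  assumes smaller_unique: "\<And>J z'. card J < card I \<Longrightarrow> count_unstable f J z' {} = 1"
begin

lemma count_unstable_pair_sum:
  assumes v: "v \<in> I" and B: "B \<subseteq> I - {v}"
  shows "count_unstable f I z B + count_unstable f I z (insert v B) = 2"
proof -
  have "card (I - {v}) < card I"
    using card_Diff1_less[OF finite v] by simp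
  then have "count_unstable f (I - {v}) z' B = 1" for z'
    using count_unstable_eq_one smaller_unique B by (metis le_less_trans)
  then show ?thesis
    using count_unstable_split[OF v B] by simp
qed

lemma no_sink_if_not_unique:
  assumes bad: "count_unstable f I z {} \<noteq> 1" and x: "x \<in> subcube I z" and j: "j \<in> I"
  shows "\<exists>i\<in>I. f (x(j := True)) i \<noteq> f (x(j := False)) i"
proof (rule ccontr)
  assume "\<not> ?thesis"
  then have same: "\<forall>i\<in>I. f (x(j := True)) i = f (x(j := False)) i" by blast
  define B where "B = unstable f I (x(j := False)) - {j}"
  have B: "B \<subseteq> I - {j}"
    by (auto simp: B_def unstable_def)
  \<comment> \<open>Flipping a sink j changes the unstable set only at j.\<close>
  have "{unstable f I (x(j := False)), unstable f I (x(j := True))} = {B, insert j B}"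
    using same j unfolding B_def unstable_def by auto
  moreover have "x(j := b) \<in> subcube I z" for b
    using x j by (auto simp: subcube_def)
  ultimately have "1 \<le> count_unstable f I z B" "1 \<le> count_unstable f I z (insert j B)"
    using count_unstable_pos by (metis doubleton_eq_iff)+
  with count_unstable_pair_sum[OF j B] have "count_unstable f I z B = 1" by simp
  then have "count_unstable f I z {} = 1"
    using pair_sums_two_imp_one_iff[OF count_unstable_pair_sum, of B] B by auto
  with bad show False ..
qed

lemma short_cycle_if_not_unique:
  assumes bad: "count_unstable f I z {} \<noteq> 1" and x: "x \<in> subcube I z"
  shows "has_short_cycle f x (card I)"
proof -
  have "I \<noteq> {}"
    using bad count_unstable_empty_dim by metis
  have arc_iff: "(\<exists>s. (j, s, i) \<in> local_graph f x) \<longleftrightarrow> f (x(j := True)) i \<noteq> f (x(j := False)) i"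
    for i j by (auto simp: local_graph_def bit_def)
  have "\<forall>j\<in>I. \<exists>i\<in>I. \<exists>s. (j, s, i) \<in> local_graph f x"
    using no_sink_if_not_unique[OF bad x] arc_iff by blast
  from cycle_if_no_sink[OF finite \<open>I \<noteq> {}\<close> this] obtain vs where
    "1 \<le> length vs" "length vs \<le> card I" "distinct vs"
    "\<forall>t < length vs. \<exists>s. (vs ! t, s, vs ! ((t + 1) mod length vs)) \<in> local_graph f x"
    by blast
  then show ?thesis
    unfolding has_short_cycle_def has_cycle_of_length_def by blast
qed

end

lemma count_unstable_empty_eq_one:
  fixes f :: "('v::finite \<Rightarrow> bool) \<Rightarrow> ('v \<Rightarrow> bool)"
  assumes few_short_cycles: "\<And>k. 1 \<le> k \<Longrightarrow> k \<le> card (UNIV :: 'v set) \<Longrightarrow>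
             card {x. has_short_cycle f x k} \<le> 2 ^ k - 1"
  shows "count_unstable f I z {} = 1"
proof (induction "card I" arbitrary: I z rule: less_induct)
  case less
  show ?case
  proof (rule ccontr)
    assume bad: "count_unstable f I z {} \<noteq> 1"
    have smaller_unique: "\<And>J z'. card J < card I \<Longrightarrow> count_unstable f J z' {} = 1"
      using less by blast
    have "I \<noteq> {}"
      using bad count_unstable_empty_dim by blast
    then have "1 \<le> card I"
      by (simp add: Suc_le_eq card_gt_0_iff)
    have "2 ^ card I = card (subcube I z)"
      by (simp add: card_subcube)
    also have "\<dots> \<le> card {x. has_short_cycle f x (card I)}"
      using short_cycle_if_not_unique[OF smaller_unique bad] by (intro card_mono) auto
    also have "\<dots> \<le> 2 ^ card I - 1"
      using \<open>1 \<le> card I\<close> by (intro few_short_cycles) (simp_all add: card_mono)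
    finally show False
      using zero_less_power[of "2::nat" "card I"] by linarith
  qed
qed

theorem corollary3:
  fixes f :: "('v::finite \<Rightarrow> bool) \<Rightarrow> ('v \<Rightarrow> bool)"
  assumes "\<And>k. 1 \<le> k \<Longrightarrow> k \<le> card (UNIV :: 'v set) \<Longrightarrow>
             card {x. has_short_cycle f x k} \<le> 2 ^ k - 1"
  shows "\<exists>!x. f x = x"
proof -
  have "card {x. f x = x} = 1"
    using count_unstable_empty_eq_one[OF assms, of UNIV] count_unstable_UNIV by metis
  then obtain a where "{x. f x = x} = {a}"
    by (auto simp: card_1_singleton_iff)
  then show ?thesis
    by (auto simp: set_eq_iff)
qed

end
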